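(* For every integer $t\ge1$, $C_5[E_{2t-1}]\rightarrow(K_{t,t},K_{t,t})^v$; consequently $F_v(K_{t,t},K_{t,t};3)\le 10t-5$.
   Context: All graphs are finite and simple. $E_s$ is the edgeless graph on $s$ vertices, $C_5$ the 5-cycle, $K_{t,t}$ the complete bipartite graph with parts of size $t$. The lexicographic product $G[H]$ has vertex set $V(G)\times V(H)$, with $\{(u_1,v_1),(u_2,v_2)\}$ an edge iff $\{u_1,u_2\}\in E(G)$, or $u_1=u_2$ and $\{v_1,v_2\}\in E(H)$. "A graph $F$ contains $H$" means $F$ has a (not necessarily induced) subgraph isomorphic to $H$. $G\rightarrow(H_1,H_2)^v$ means: for every partition $V(G)=X_1\cup X_2$ there is $i$ such that the subgraph induced by $X_i$ contains $H_i$. $F_v(H_1,H_2;k)$ is the minimum number of vertices of a $K_k$-free graph $G$ with $G\rightarrow(H_1,H_2)^v$. *)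

theory Defs
  imports Main
begin

type_synonym 'a graph = "'a set \<times> 'a set set"

definition verts :: "'a graph \<Rightarrow> 'a set" where "verts G = fst G"
definition edges :: "'a graph \<Rightarrow> 'a set set" where "edges G = snd G"

definition wf_graph :: "'a graph \<Rightarrow> bool" where
  "wf_graph G \<longleftrightarrow> finite (verts G) \<and>
     (\<forall>e\<in>edges G. \<exists>u v. e = {u, v} \<and> u \<noteq> v \<and> u \<in> verts G \<and> v \<in> verts G)"

definition contains :: "'a graph \<Rightarrow> 'b graph \<Rightarrow> bool" where
  "contains F H \<longleftrightarrow> (\<exists>f. inj_on f (verts H) \<and> f ` verts H \<subseteq> verts F \<and>
      (\<forall>u v. {u, v} \<in> edges H \<longrightarrow> {f u, f v} \<in> edges F))"

definition induced :: "'a graph \<Rightarrow> 'a set \<Rightarrow> 'a graph" where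
  "induced G X = (X \<inter> verts G, {e \<in> edges G. e \<subseteq> X})"

definition vertex_arrow :: "'a graph \<Rightarrow> 'b graph \<Rightarrow> 'c graph \<Rightarrow> bool" where
  "vertex_arrow G H1 H2 \<longleftrightarrow> (\<forall>X1 X2. X1 \<union> X2 = verts G \<longrightarrow> X1 \<inter> X2 = {} \<longrightarrow>
      contains (induced G X1) H1 \<or> contains (induced G X2) H2)"

definition complete_graph :: "nat \<Rightarrow> nat graph" where
  "complete_graph k = ({..<k}, {{i, j} | i j. i < k \<and> j < k \<and> i \<noteq> j})"

definition edgeless_graph :: "nat \<Rightarrow> nat graph" where
  "edgeless_graph s = ({..<s}, {})"

definition cycle5 :: "nat graph" where
  "cycle5 = ({..<5}, {{i, (i + 1) mod 5} | i. i < 5})"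

definition complete_bipartite :: "nat \<Rightarrow> (nat \<times> bool) graph" where
  "complete_bipartite t = ({..<t} \<times> UNIV,
      {{(i, False), (j, True)} | i j. i < t \<and> j < t})"

definition lex_product :: "'a graph \<Rightarrow> 'b graph \<Rightarrow> ('a \<times> 'b) graph" where
  "lex_product G H = (verts G \<times> verts H,
      {{(u1, v1), (u2, v2)} | u1 v1 u2 v2.
         u1 \<in> verts G \<and> u2 \<in> verts G \<and> v1 \<in> verts H \<and> v2 \<in> verts H \<and>
         ({u1, u2} \<in> edges G \<or> (u1 = u2 \<and> {v1, v2} \<in> edges H))})"

text \<open>F_v(H1,H2;k): least number of vertices of a K_k-free graph G with G \<rightarrow> (H1,H2)^v.
  Graphs are taken with vertex type nat (every finite graph is isomorphic to one).\<close>
definition Fv :: "'b graph \<Rightarrow> 'c graph \<Rightarrow> nat \<Rightarrow> nat" where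
  "Fv H1 H2 k = (LEAST n. \<exists>G :: nat graph. wf_graph G \<and> card (verts G) = n \<and>
      \<not> contains G (complete_graph k) \<and> vertex_arrow G H1 H2)"

end

theory Submission
  imports Defs "HOL-Library.Countable"
begin

text \<open>Give each fibre of C_5[E_{2t-1}] over a vertex of C_5 the colour of a part containing
  at least t of its 2t - 1 vertices. Since C_5 is an odd cycle, two adjacent fibres receive the
  same colour; they are completely joined, so their t + t vertices in that part span a K_{t,t}.
  Blowing up the vertices of the triangle-free C_5 into independent sets creates no triangle, so
  this graph on 5(2t - 1) vertices, relabelled onto nat, witnesses the bound on F_v.\<close>

definition map_graph :: "('a \<Rightarrow> 'b) \<Rightarrow> 'a graph \<Rightarrow> 'b graph" where
  "map_graph h G = (h ` verts G, image h ` edges G)"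

lemma verts_map_graph [simp]: "verts (map_graph h G) = h ` verts G"
  by (simp add: map_graph_def verts_def)

lemma edges_map_graph [simp]: "edges (map_graph h G) = image h ` edges G"
  by (simp add: map_graph_def edges_def)

lemma verts_induced [simp]: "verts (induced G X) = X \<inter> verts G"
  by (simp add: induced_def verts_def)

lemma edges_induced [simp]: "edges (induced G X) = {e \<in> edges G. e \<subseteq> X}"
  by (simp add: induced_def edges_def)

lemma wf_graph_edgeD:
  assumes "wf_graph G" "{u, v} \<in> edges G"
  shows "u \<noteq> v" "u \<in> verts G" "v \<in> verts G"
  using assms unfolding wf_graph_def by (auto simp: doubleton_eq_iff)

lemma contains_induced_mono:
  assumes "contains (induced G X) H" "X \<subseteq> Y"
  shows "contains (induced G Y) H"
proof -
  have "verts (induced G X) \<subseteq> verts (induced G Y)" "edges (induced G X) \<subseteq> edges (induced G Y)"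
    using assms(2) by auto
  moreover obtain f where "inj_on f (verts H)" "f ` verts H \<subseteq> verts (induced G X)"
    "\<forall>u v. {u, v} \<in> edges H \<longrightarrow> {f u, f v} \<in> edges (induced G X)"
    using assms(1) unfolding contains_def by blast
  ultimately show ?thesis
    unfolding contains_def by (intro exI[of _ f]) blast
qed

lemma induced_map_graph: "induced (map_graph h G) X = map_graph h (induced G (h -` X))"
  unfolding induced_def map_graph_def verts_def edges_def by auto

lemma wf_graph_map_graph:
  assumes "inj_on h (verts G)" "wf_graph G"
  shows "wf_graph (map_graph h G)"
  using assms unfolding wf_graph_def by (fastforce simp: inj_on_eq_iff)

lemma contains_map_graph_iff:
  assumes "inj h"
  shows "contains (map_graph h G) K \<longleftrightarrow> contains G K"
proof
  assume "contains (map_graph h G) K"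
  then obtain f where f: "inj_on f (verts K)" "f ` verts K \<subseteq> h ` verts G"
    "\<And>u v. {u, v} \<in> edges K \<Longrightarrow> {f u, f v} \<in> image h ` edges G"
    unfolding contains_def by auto
  define g where "g = inv h \<circ> f"
  have h_g: "h (g x) = f x" "g x \<in> verts G" if "x \<in> verts K" for x
    using f(2) that assms by (auto simp: g_def)
  have "inj_on g (verts K)"
    using f(1) h_g(1) by (metis inj_on_def)
  moreover have "g ` verts K \<subseteq> verts G"
    using h_g(2) by blast
  moreover have "{g u, g v} \<in> edges G" if uv: "{u, v} \<in> edges K" for u v
  proof -
    obtain e where e: "e \<in> edges G" "{f u, f v} = h ` e"
      using f(3)[OF uv] by blast
    have "{g u, g v} = inv h ` {f u, f v}"
      by (simp add: g_def)
    also have "\<dots> = e"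
      unfolding e(2) by (rule image_inv_f_f[OF assms])
    finally show ?thesis
      using e(1) by simp
  qed
  ultimately show "contains G K"
    unfolding contains_def by blast
next
  assume "contains G K"
  then obtain f where f: "inj_on f (verts K)" "f ` verts K \<subseteq> verts G"
    "\<And>u v. {u, v} \<in> edges K \<Longrightarrow> {f u, f v} \<in> edges G"
    unfolding contains_def by auto
  have "inj_on (h \<circ> f) (verts K)"
    using f(1) assms by (simp add: comp_inj_on inj_on_subset)
  moreover have "(h \<circ> f) ` verts K \<subseteq> h ` verts G"
    using f(2) by auto
  moreover have "{(h \<circ> f) u, (h \<circ> f) v} \<in> image h ` edges G" if "{u, v} \<in> edges K" for u v
    using f(3)[OF that] by (intro rev_image_eqI[of "{f u, f v}"]) simp_all
  ultimately show "contains (map_graph h G) K"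
    unfolding contains_def by (intro exI[of _ "h \<circ> f"]) simp
qed

lemma vertex_arrow_map_graph:
  assumes "inj h" "vertex_arrow G H1 H2"
  shows "vertex_arrow (map_graph h G) H1 H2"
  unfolding vertex_arrow_def
proof (intro allI impI)
  fix X1 X2 assume cover: "X1 \<union> X2 = verts (map_graph h G)" and disj: "X1 \<inter> X2 = {}"
  have "(h -` X1 \<inter> verts G) \<union> (h -` X2 \<inter> verts G) = verts G"
    "(h -` X1 \<inter> verts G) \<inter> (h -` X2 \<inter> verts G) = {}"
    using cover disj by auto
  then have "contains (induced G (h -` X1 \<inter> verts G)) H1 \<or> contains (induced G (h -` X2 \<inter> verts G)) H2"
    using assms(2) unfolding vertex_arrow_def by blast
  then show "contains (induced (map_graph h G) X1) H1 \<or> contains (induced (map_graph h G) X2) H2"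
    unfolding induced_map_graph contains_map_graph_iff[OF assms(1)]
    by (meson contains_induced_mono inf_le1)
qed

lemma verts_lex_product [simp]: "verts (lex_product G H) = verts G \<times> verts H"
  by (simp add: lex_product_def verts_def)

lemma card_verts_lex_product: "card (verts (lex_product G H)) = card (verts G) * card (verts H)"
  by (simp add: card_cartesian_product)

lemma edges_lex_productE:
  assumes "e \<in> edges (lex_product G H)"
  obtains u1 v1 u2 v2 where "e = {(u1, v1), (u2, v2)}"
    "u1 \<in> verts G" "u2 \<in> verts G" "v1 \<in> verts H" "v2 \<in> verts H"
    "{u1, u2} \<in> edges G \<or> (u1 = u2 \<and> {v1, v2} \<in> edges H)"
  using assms unfolding lex_product_def edges_def verts_def by auto

lemma doubleton_in_edges_lex_product:
  "{(u1, v1), (u2, v2)} \<in> edges (lex_product G H) \<longleftrightarrow>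
     u1 \<in> verts G \<and> u2 \<in> verts G \<and> v1 \<in> verts H \<and> v2 \<in> verts H \<and>
     ({u1, u2} \<in> edges G \<or> (u1 = u2 \<and> {v1, v2} \<in> edges H))"
proof
  assume "{(u1, v1), (u2, v2)} \<in> edges (lex_product G H)"
  then show "u1 \<in> verts G \<and> u2 \<in> verts G \<and> v1 \<in> verts H \<and> v2 \<in> verts H \<and>
     ({u1, u2} \<in> edges G \<or> (u1 = u2 \<and> {v1, v2} \<in> edges H))"
    by (rule edges_lex_productE) (auto simp: doubleton_eq_iff insert_commute)
qed (auto simp: lex_product_def edges_def verts_def)

lemma wf_graph_lex_product:
  assumes "wf_graph G" "wf_graph H"
  shows "wf_graph (lex_product G H)"
  unfolding wf_graph_def
proof (intro conjI ballI)
  show "finite (verts (lex_product G H))"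
    using assms by (simp add: wf_graph_def)
next
  fix e assume "e \<in> edges (lex_product G H)"
  then obtain u1 v1 u2 v2 where e: "e = {(u1, v1), (u2, v2)}"
    "u1 \<in> verts G" "u2 \<in> verts G" "v1 \<in> verts H" "v2 \<in> verts H"
    "{u1, u2} \<in> edges G \<or> (u1 = u2 \<and> {v1, v2} \<in> edges H)"
    by (rule edges_lex_productE)
  then have "(u1, v1) \<noteq> (u2, v2)"
    using assms by (auto dest: wf_graph_edgeD(1))
  with e show "\<exists>x y. e = {x, y} \<and> x \<noteq> y \<and> x \<in> verts (lex_product G H) \<and> y \<in> verts (lex_product G H)"
    by auto
qed

lemma wf_graph_edgeless_graph: "wf_graph (edgeless_graph s)"
  by (simp add: wf_graph_def edgeless_graph_def verts_def edges_def)

lemma edges_edgeless_graph [simp]: "edges (edgeless_graph s) = {}"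
  by (simp add: edgeless_graph_def edges_def)

lemma verts_edgeless_graph [simp]: "verts (edgeless_graph s) = {..<s}"
  by (simp add: edgeless_graph_def verts_def)

lemma verts_complete_graph [simp]: "verts (complete_graph k) = {..<k}"
  by (simp add: complete_graph_def verts_def)

lemma doubleton_in_edges_complete_graph:
  "{i, j} \<in> edges (complete_graph k) \<longleftrightarrow> i < k \<and> j < k \<and> i \<noteq> j"
  by (auto simp: complete_graph_def edges_def doubleton_eq_iff)

lemma contains_triangle_lex_product_edgeless:
  assumes "wf_graph G" "contains (lex_product G (edgeless_graph s)) (complete_graph 3)"
  shows "contains G (complete_graph 3)"
proof -
  obtain f where f_verts: "f ` {..<3} \<subseteq> verts G \<times> verts (edgeless_graph s)"
    and f_edges: "\<And>i j. {i, j} \<in> edges (complete_graph 3) \<Longrightarrow>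
      {f i, f j} \<in> edges (lex_product G (edgeless_graph s))"
    using assms(2) unfolding contains_def by auto
  have fst_edge: "{fst (f i), fst (f j)} \<in> edges G" if "i < 3" "j < 3" "i \<noteq> j" for i j
    using f_edges[of i j] that
      doubleton_in_edges_lex_product[of "fst (f i)" "snd (f i)" "fst (f j)" "snd (f j)"]
    by (simp add: doubleton_in_edges_complete_graph)
  have "inj_on (fst \<circ> f) {..<3}"
    by (rule inj_onI) (use fst_edge assms(1) in \<open>fastforce dest: wf_graph_edgeD(1)\<close>)
  moreover have "(fst \<circ> f) ` {..<3} \<subseteq> verts G"
    using f_verts by auto
  ultimately show ?thesis
    unfolding contains_def doubleton_in_edges_complete_graph
    using fst_edge by (intro exI[of _ "fst \<circ> f"]) auto
qed

lemma contains_complete_bipartite_lex_product: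
  assumes "wf_graph G" "{i, j} \<in> edges G"
    and "A \<subseteq> verts H" "finite A" "t \<le> card A" "{i} \<times> A \<subseteq> X"
    and "B \<subseteq> verts H" "finite B" "t \<le> card B" "{j} \<times> B \<subseteq> X"
  shows "contains (induced (lex_product G H) X) (complete_bipartite t)"
proof -
  obtain \<alpha> where \<alpha>: "\<alpha> ` {..<t} \<subseteq> A" "inj_on \<alpha> {..<t}"
    using card_le_inj[of "{..<t}" A] assms(4,5) by auto
  obtain \<beta> where \<beta>: "\<beta> ` {..<t} \<subseteq> B" "inj_on \<beta> {..<t}"
    using card_le_inj[of "{..<t}" B] assms(8,9) by auto
  define f where "f = (\<lambda>(k, c). if c then (j, \<beta> k) else (i, \<alpha> k))"
  have verts_Ktt: "verts (complete_bipartite t) = {..<t} \<times> UNIV"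
    by (simp add: complete_bipartite_def verts_def)
  have ij: "i \<noteq> j" "i \<in> verts G" "j \<in> verts G"
    using wf_graph_edgeD[OF assms(1,2)] by simp_all
  have fibres: "(i, \<alpha> k) \<in> X \<inter> verts (lex_product G H)" "(j, \<beta> k) \<in> X \<inter> verts (lex_product G H)"
    if "k < t" for k
    using that \<alpha>(1) \<beta>(1) ij assms by auto
  have "inj_on f ({..<t} \<times> UNIV)"
    using \<alpha>(2) \<beta>(2) ij(1) by (auto simp: f_def inj_on_def split: if_splits)
  moreover have "f ` ({..<t} \<times> UNIV) \<subseteq> X \<inter> verts (lex_product G H)"
    using fibres by (auto simp: f_def split: if_split_asm)
  moreover have "{f u, f v} \<in> edges (induced (lex_product G H) X)"
    if uv: "{u, v} \<in> edges (complete_bipartite t)" for u v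
  proof -
    obtain k l where kl: "k < t" "l < t" "{u, v} = {(k, False), (l, True)}"
      using uv unfolding complete_bipartite_def edges_def by auto
    then have "{f u, f v} = {(i, \<alpha> k), (j, \<beta> l)}"
      by (auto simp: f_def doubleton_eq_iff)
    moreover have "{(i, \<alpha> k), (j, \<beta> l)} \<in> edges (lex_product G H)"
      using fibres[OF kl(1)] fibres[OF kl(2)] assms(2) by (simp add: doubleton_in_edges_lex_product)
    moreover have "{(i, \<alpha> k), (j, \<beta> l)} \<subseteq> X"
      using fibres[OF kl(1)] fibres[OF kl(2)] by simp
    ultimately show ?thesis by simp
  qed
  ultimately show ?thesis
    unfolding contains_def verts_Ktt by (intro exI[of _ f]) auto
qed

lemma verts_cycle5 [simp]: "verts cycle5 = {..<5}"
  by (simp add: cycle5_def verts_def)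

lemma edges_cycle5: "edges cycle5 = {{0, 1}, {1, 2}, {2, 3}, {3, 4}, {4, 0}}"
proof -
  have "{..<5::nat} = {0, 1, 2, 3, 4}"
    by auto
  then have "{{i, (i + 1) mod 5} | i. i < (5::nat)} = (\<lambda>i. {i, (i + 1) mod 5}) ` {0, 1, 2, 3, 4}"
    by blast
  then show ?thesis
    by (simp add: cycle5_def edges_def numeral_2_eq_2)
qed

lemma edges_cycle5_iff:
  "{p, q} \<in> edges cycle5 \<longleftrightarrow>
     p < 5 \<and> q < 5 \<and> (q = p + 1 \<or> p = q + 1 \<or> (p = 4 \<and> q = 0) \<or> (p = 0 \<and> q = 4))"
  unfolding edges_cycle5 insert_iff empty_iff doubleton_eq_iff by arith

lemma wf_graph_cycle5: "wf_graph cycle5"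
  unfolding wf_graph_def edges_cycle5 verts_cycle5 by force

lemma cycle5_triangle_free: "\<not> contains cycle5 (complete_graph 3)"
proof
  assume "contains cycle5 (complete_graph 3)"
  then obtain f :: "nat \<Rightarrow> nat" where f: "\<And>i j. i < 3 \<Longrightarrow> j < 3 \<Longrightarrow> i \<noteq> j \<Longrightarrow> {f i, f j} \<in> edges cycle5"
    unfolding contains_def doubleton_in_edges_complete_graph by auto
  show False
    using f[of 0 1] f[of 1 2] f[of 0 2] unfolding edges_cycle5_iff by linarith
qed

lemma cycle5_monochromatic_edge:
  fixes c :: "nat \<Rightarrow> bool"
  obtains i j where "{i, j} \<in> edges cycle5" "c i = c j"
proof -
  have "c 0 = c 1 \<or> c 1 = c 2 \<or> c 2 = c 3 \<or> c 3 = c 4 \<or> c 4 = c 0"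
    by auto
  then show ?thesis
    using that[of 0 1] that[of 1 2] that[of 2 3] that[of 3 4] that[of 4 0]
    by (auto simp: edges_cycle5)
qed

lemma vertex_arrow_cycle5_lex_product:
  assumes "finite (verts H)" "2 * t - 1 \<le> card (verts H)"
  shows "vertex_arrow (lex_product cycle5 H) (complete_bipartite t) (complete_bipartite t)"
  unfolding vertex_arrow_def
proof (intro allI impI)
  fix X1 X2
  assume cover: "X1 \<union> X2 = verts (lex_product cycle5 H)" and disj: "X1 \<inter> X2 = {}"
  define fibre where "fibre X i = {v \<in> verts H. (i, v) \<in> X}" for X and i :: nat
  have fibre_finite: "finite (fibre X i)" for X i
    using assms(1) by (simp add: fibre_def)
  have pigeonhole: "t \<le> card (fibre X1 i) \<or> t \<le> card (fibre X2 i)" if "i < 5" for i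
  proof -
    have "fibre X1 i \<union> fibre X2 i = verts H" "fibre X1 i \<inter> fibre X2 i = {}"
      using cover disj that by (auto simp: fibre_def)
    then have "card (fibre X1 i) + card (fibre X2 i) = card (verts H)"
      by (metis card_Un_disjoint fibre_finite)
    then show ?thesis using assms(2) by linarith
  qed
  have bipartite: "contains (induced (lex_product cycle5 H) X) (complete_bipartite t)"
    if "{i, j} \<in> edges cycle5" "t \<le> card (fibre X i)" "t \<le> card (fibre X j)" for X i j
    using that fibre_finite
    by (intro contains_complete_bipartite_lex_product[OF wf_graph_cycle5, where A = "fibre X i" and B = "fibre X j"])
      (auto simp: fibre_def)
  obtain i j where ij: "{i, j} \<in> edges cycle5"
    and same_colour: "(t \<le> card (fibre X1 i)) = (t \<le> card (fibre X1 j))"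
    by (rule cycle5_monochromatic_edge)
  have "i < 5" "j < 5"
    using wf_graph_edgeD[OF wf_graph_cycle5 ij] by simp_all
  then show "contains (induced (lex_product cycle5 H) X1) (complete_bipartite t) \<or>
      contains (induced (lex_product cycle5 H) X2) (complete_bipartite t)"
    using same_colour pigeonhole[of i] pigeonhole[of j] bipartite[OF ij] by blast
qed

lemma Fv_le_card:
  fixes G :: "'a::countable graph"
  assumes "wf_graph G" "\<not> contains G (complete_graph k)" "vertex_arrow G H1 H2"
  shows "Fv H1 H2 k \<le> card (verts G)"
proof -
  let ?G' = "map_graph to_nat G"
  have "wf_graph ?G'" "\<not> contains ?G' (complete_graph k)" "vertex_arrow ?G' H1 H2"
    using assms by (simp_all add: wf_graph_map_graph contains_map_graph_iff vertex_arrow_map_graph)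
  moreover have "card (verts ?G') = card (verts G)"
    by (simp add: card_image)
  ultimately show ?thesis
    unfolding Fv_def by (intro Least_le) blast
qed

theorem mainTheorem8:
  fixes t :: nat
  assumes "t \<ge> 1"
  shows "vertex_arrow (lex_product cycle5 (edgeless_graph (2 * t - 1)))
           (complete_bipartite t) (complete_bipartite t)
         \<and> Fv (complete_bipartite t) (complete_bipartite t) 3 \<le> 10 * t - 5"
proof
  let ?G = "lex_product cycle5 (edgeless_graph (2 * t - 1))"
  show arrow: "vertex_arrow ?G (complete_bipartite t) (complete_bipartite t)"
    by (rule vertex_arrow_cycle5_lex_product) simp_all
  have "wf_graph ?G"
    by (intro wf_graph_lex_product wf_graph_cycle5 wf_graph_edgeless_graph)
  moreover have "\<not> contains ?G (complete_graph 3)"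
    using contains_triangle_lex_product_edgeless[OF wf_graph_cycle5] cycle5_triangle_free by blast
  moreover have "card (verts ?G) = 10 * t - 5"
    unfolding card_verts_lex_product by simp
  ultimately show "Fv (complete_bipartite t) (complete_bipartite t) 3 \<le> 10 * t - 5"
    using Fv_le_card[of ?G 3] arrow by simp
qed

end
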